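(* Let $p$ be an odd prime, and let $k,m$ be positive integers with $km=p-1$. Let $G$ be the multiplicative group $\{r+p\mathbb{Z}: r=1,\ldots,p-1\}$ and $H$ its subgroup $\{x^m+p\mathbb{Z}: x=1,\ldots,p-1\}$ of order $k$. Suppose that the $m$ distinct cosets of $H$ in $G$ are $$\{a_{1j}+p\mathbb{Z}: j=1,\ldots,k\},\ \ldots,\ \{a_{mj}+p\mathbb{Z}: j=1,\ldots,k\}$$ with $1\le a_{i1}<\cdots<a_{ik}\le p-1$ for all $i=1,\ldots,m$. Then $$\prod_{i=1}^m\prod_{1\le s<t\le k}(a_{it}-a_{is})\equiv\begin{cases}(-1)^{\frac{p+1}2\cdot\frac{p-1}{2m}+\lfloor\frac{p-3}4\rfloor}\left(\frac{p-1}2\right)!\pmod p&\text{if } p\equiv1\pmod{2m},\\(-1)^{\frac{p+1}2\cdot\frac{p-1-m}{2m}}\pmod p&\text{if } p\equiv1+m\pmod{2m}.\end{cases}$$ *)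

theory Defs
  imports "HOL-Number_Theory.Number_Theory"
begin

definition mpowers :: "nat \<Rightarrow> nat \<Rightarrow> int set" where
  "mpowers p m = {(x ^ m) mod int p | x. x \<in> {1..int p - 1}}"

definition cosets_mod :: "nat \<Rightarrow> int set \<Rightarrow> int set set" where
  "cosets_mod p H = {{(g * h) mod int p | h. h \<in> H} | g. g \<in> {1..int p - 1}}"

end

(* Two elements of G lie in a common coset of H exactly when their k-th powers agree mod p, so
   the product runs over the pairs x < y in G with x^k = y^k.  A pair with x + y <> p is
   {x, c x mod p} for a k-th root of unity c different from 1 and -1, and exactly two such roots,
   c and its inverse, produce it; keeping the smaller one, these pairs correspond to the (c, x)
   with x ranging over all of G.  For fixed c <> 1, the product over x of |c x mod p - x| is
   congruent to (-1)^((p-1)/2) (c-1)^(p-1) (p-1)! = (-1)^((p+1)/2): the sign counts the descents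
   c x mod p < x, which the involution x -> p - x shows to be half of G.  The pairs (x, p - x)
   occur only for even k and contribute the product of the p - 2x, which is
   (-2)^((p-1)/2) ((p-1)/2)!, with 2^((p-1)/2) evaluated by Gauss's lemma. *)

theory Submission
  imports Defs
begin

definition strict_pairs :: "'a::linorder set \<Rightarrow> ('a \<times> 'a) set" where
  "strict_pairs A = {(x, y). x \<in> A \<and> y \<in> A \<and> x < y}"

lemma finite_strict_pairs: "finite A \<Longrightarrow> finite (strict_pairs A)"
  by (rule finite_subset[of _ "A \<times> A"]) (auto simp: strict_pairs_def)

lemma prod_strict_pairs_reindex:
  fixes f :: "'a::linorder \<Rightarrow> 'b::linorder"
  assumes "strict_mono_on A f"
  shows "(\<Prod>(s, t)\<in>strict_pairs A. g (f s) (f t)) = (\<Prod>(x, y)\<in>strict_pairs (f ` A). g x y)"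
proof -
  have inj: "inj_on (map_prod f f) (strict_pairs A)"
    using strict_mono_on_imp_inj_on[OF assms]
    by (auto simp: strict_pairs_def inj_on_def)
  have "map_prod f f ` strict_pairs A = strict_pairs (f ` A)"
  proof (intro equalityI subsetI)
    fix z assume "z \<in> strict_pairs (f ` A)"
    then obtain s t where "s \<in> A" "t \<in> A" "f s < f t" "z = (f s, f t)"
      by (auto simp: strict_pairs_def)
    moreover from this have "s < t"
      using assms by (metis linorder_neqE order_less_asym strict_mono_onD)
    ultimately show "z \<in> map_prod f f ` strict_pairs A"
      by (force simp: strict_pairs_def)
  qed (use assms in \<open>auto simp: strict_pairs_def strict_mono_on_def\<close>)
  then show ?thesis
    using prod.reindex[OF inj, of "\<lambda>(x, y). g x y"] by (simp add: case_prod_map_prod)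
qed

lemma prod_eq_sign_mult_prod_abs:
  fixes f :: "'a \<Rightarrow> 'b::linordered_idom"
  assumes "finite A"
  shows "(\<Prod>x\<in>A. f x) = (-1) ^ card {x \<in> A. f x < 0} * (\<Prod>x\<in>A. \<bar>f x\<bar>)"
proof -
  have "(\<Prod>x\<in>A. f x) = (\<Prod>x\<in>A. (if f x < 0 then -1 else 1) * \<bar>f x\<bar>)"
    by (rule prod.cong) auto
  also have "\<dots> = (\<Prod>x\<in>A. if f x < 0 then -1 else 1) * (\<Prod>x\<in>A. \<bar>f x\<bar>)"
    by (rule prod.distrib)
  also have "(\<Prod>x\<in>A. if f x < 0 then -1 else 1) = ((-1::'b) ^ card {x \<in> A. f x < 0})"
    using assms by (simp add: prod.If_cases Int_def conj_commute)
  finally show ?thesis .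
qed

lemma min_max_eq_iff:
  fixes a b c d :: "'a::linorder"
  shows "(min a b, max a b) = (min c d, max c d) \<longleftrightarrow> (a = c \<and> b = d) \<or> (a = d \<and> b = c)"
  by (cases "a \<le> b"; cases "c \<le> d") (auto simp: min_def max_def)

lemma max_minus_min: "max a b - min a b = \<bar>b - a\<bar>" for a b :: "'a::linordered_idom"
  by (simp add: max_def min_def)

section \<open>Arithmetic modulo an odd prime\<close>

locale odd_prime =
  fixes p :: nat
  assumes prime: "prime p" and odd: "odd p"
begin

definition G :: "int set" where "G = {1..int p - 1}"

abbreviation inv_mod :: "int \<Rightarrow> int" where "inv_mod c \<equiv> modular_inverse (int p) c"

lemma p_gt_2: "p > 2"
  using prime odd prime_ge_2_nat[OF prime] by (metis dvd_refl le_neq_implies_less)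

lemma prime_int: "prime (int p)"
  using prime by simp

lemma G_atLeastLessThan: "G = {1..<int p}"
  by (auto simp: G_def)

lemma finite_G [simp]: "finite G"
  by (simp add: G_def)

lemma card_G: "card G = p - 1"
  using p_gt_2 by (simp add: G_def)

lemma one_in_G: "1 \<in> G"
  using p_gt_2 by (simp add: G_def)

lemma minus_in_G: "x \<in> G \<Longrightarrow> int p - x \<in> G"
  by (auto simp: G_def)

lemma G_not_dvd: "x \<in> G \<Longrightarrow> \<not> int p dvd x"
  by (auto simp: G_def dest: zdvd_imp_le)

lemma G_coprime: "x \<in> G \<Longrightarrow> coprime x (int p)"
  using prime_imp_coprime[OF prime_int G_not_dvd] by (simp add: coprime_commute)

lemma G_cong_imp_eq: "x \<in> G \<Longrightarrow> y \<in> G \<Longrightarrow> [x = y] (mod int p) \<Longrightarrow> x = y"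
  by (simp add: G_def cong_def)

lemma fermat_G: "x \<in> G \<Longrightarrow> [x ^ (p - 1) = 1] (mod int p)"
proof -
  assume "x \<in> G"
  then have "[nat x ^ (p - 1) = 1] (mod p)"
    using fermat_theorem[OF prime] G_not_dvd
    by (metis G_def atLeastAtMost_iff int_dvd_int_iff int_nat_eq order.trans zero_le_one)
  then show ?thesis
    using \<open>x \<in> G\<close> by (simp add: G_def flip: cong_int_iff)
qed

lemma bij_betw_mult_mod: "c \<in> G \<Longrightarrow> bij_betw (\<lambda>x. (c * x) mod int p) G G"
  unfolding G_atLeastLessThan
  by (rule bij_betw_int_remainders_mult) (simp add: G_coprime flip: G_atLeastLessThan)

lemma mult_mod_in_G: "c \<in> G \<Longrightarrow> x \<in> G \<Longrightarrow> (c * x) mod int p \<in> G"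
  using bij_betw_apply[OF bij_betw_mult_mod] .

lemma cong_inv_mod: "c \<in> G \<Longrightarrow> [c * inv_mod c = 1] (mod int p)"
  by (simp add: G_coprime cong_modular_inverse1 coprime_commute)

lemma inv_mod_eqI: "c \<in> G \<Longrightarrow> d \<in> G \<Longrightarrow> [c * d = 1] (mod int p) \<Longrightarrow> inv_mod c = d"
  by (rule modular_inverse_int_eqI) (auto simp: G_def)

lemma inv_mod_in_G: "c \<in> G \<Longrightarrow> inv_mod c \<in> G"
  using mult_modular_inverse_int_pos[of "int p" c] modular_inverse_int_less[of "int p" c]
    p_gt_2 G_coprime by (auto simp: G_def)

lemma inv_mod_inv_mod: "c \<in> G \<Longrightarrow> inv_mod (inv_mod c) = c"
  by (metis cong_inv_mod inv_mod_eqI inv_mod_in_G mult.commute)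

lemma inv_mod_eq_self_iff: "c \<in> G \<Longrightarrow> inv_mod c = c \<longleftrightarrow> c = 1 \<or> c = int p - 1"
proof
  assume "c \<in> G" "inv_mod c = c"
  then have "[c * c = 1] (mod int p)"
    using cong_inv_mod by metis
  then have "[c = 1] (mod int p) \<or> [c = - 1] (mod int p)"
    using cong_square[OF prime_int] \<open>c \<in> G\<close> by (simp add: G_def)
  moreover have "[- 1 = int p - 1] (mod int p)"
    by (simp add: cong_iff_dvd_diff)
  ultimately have "[c = 1] (mod int p) \<or> [c = int p - 1] (mod int p)"
    using cong_trans by blast
  then show "c = 1 \<or> c = int p - 1"
    using G_cong_imp_eq \<open>c \<in> G\<close> one_in_G minus_in_G[OF one_in_G] by blast
next
  assume "c \<in> G" "c = 1 \<or> c = int p - 1"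
  moreover have "[(int p - 1) * (int p - 1) = 1] (mod int p)"
    by (simp add: cong_iff_dvd_diff algebra_simps)
  ultimately show "inv_mod c = c"
    using inv_mod_eqI by auto
qed

lemma mult_mod_right_cancel:
  assumes "c \<in> G" "d \<in> G" "x \<in> G" "(c * x) mod int p = (d * x) mod int p"
  shows "c = d"
proof -
  have "(x * c) mod int p = (x * d) mod int p"
    using assms(4) by (simp only: mult.commute)
  then show ?thesis
    using inj_onD[OF bij_betw_imp_inj_on[OF bij_betw_mult_mod[OF assms(3)]]] assms(1,2) by blast
qed

lemma mult_mod_surj:
  assumes "x \<in> G" "y \<in> G"
  obtains c where "c \<in> G" "(c * x) mod int p = y"
proof -
  have "y \<in> (\<lambda>c. (x * c) mod int p) ` G"
    using bij_betw_imp_surj_on[OF bij_betw_mult_mod[OF assms(1)]] assms(2) by simp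
  then obtain c where "c \<in> G" "(x * c) mod int p = y"
    by blast
  then show ?thesis
    using that by (simp add: mult.commute)
qed

lemma mult_mod_neq:
  assumes "c \<in> G" "c \<noteq> 1" "x \<in> G"
  shows "(c * x) mod int p \<noteq> x"
proof
  assume "(c * x) mod int p = x"
  then have "(c * x) mod int p = (1 * x) mod int p"
    using assms(3) by (simp add: G_def)
  then show False
    using mult_mod_right_cancel[OF assms(1) one_in_G assms(3)] assms(2) by blast
qed

lemma mult_mod_minus:
  assumes "c \<in> G" "x \<in> G"
  shows "(c * (int p - x)) mod int p = int p - (c * x) mod int p"
proof -
  have "(c * (int p - x)) mod int p = (- (c * x)) mod int p"
    by (simp add: mod_eq_dvd_iff algebra_simps)
  also have "\<dots> = int p - (c * x) mod int p"
    using mult_mod_in_G[OF assms] by (simp add: zmod_zminus1_eq_if G_def)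
  finally show ?thesis .
qed

lemma card_mult_mod_descents:
  assumes "c \<in> G" "c \<noteq> 1"
  shows "card {x \<in> G. (c * x) mod int p < x} = (p - 1) div 2"
proof -
  define A where "A = {x \<in> G. (c * x) mod int p < x}"
  have reflect: "int p - x \<in> A \<longleftrightarrow> x \<notin> A" if "x \<in> G" for x
    using mult_mod_minus[OF assms(1) that] mult_mod_neq[OF assms that] minus_in_G[OF that] that
    by (auto simp: A_def)
  have "(\<lambda>x. int p - x) ` A = G - A"
  proof (intro equalityI subsetI)
    fix y assume "y \<in> G - A"
    then have "int p - y \<in> A" "y = int p - (int p - y)"
      using reflect by auto
    then show "y \<in> (\<lambda>x. int p - x) ` A"
      by blast
  qed (use reflect minus_in_G in \<open>auto simp: A_def\<close>)
  then have "card (G - A) = card A"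
    by (metis card_image inj_on_diff_left)
  moreover have "card (G - A) + card A = p - 1"
    using card_G card_Diff_subset[of A G] card_mono[of G A] by (auto simp: A_def)
  ultimately show ?thesis
    by (simp add: A_def)
qed

lemma wilson_G: "[(\<Prod>x\<in>G. x) = - 1] (mod int p)"
proof -
  have "G = {int 1..int (p - 1)}"
    using p_gt_2 by (simp add: G_def of_nat_diff)
  then have "(\<Prod>x\<in>G. x) = (\<Prod>x\<in>{1..p - 1}. int x)"
    by (simp only: prod_int_eq)
  also have "\<dots> = fact (p - 1)"
    by (simp add: fact_prod)
  finally show ?thesis
    using wilson_theorem[OF prime] by simp
qed

lemma prod_abs_mult_mod_diff:
  assumes "c \<in> G" "c \<noteq> 1"
  shows "[(\<Prod>x\<in>G. \<bar>(c * x) mod int p - x\<bar>) = (-1) ^ ((p + 1) div 2)] (mod int p)"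
proof -
  have "[(\<Prod>x\<in>G. (c * x) mod int p - x) = (\<Prod>x\<in>G. (c - 1) * x)] (mod int p)"
    by (rule cong_prod) (simp add: cong_def mod_diff_left_eq left_diff_distrib)
  also have "(\<Prod>x\<in>G. (c - 1) * x) = (c - 1) ^ (p - 1) * (\<Prod>x\<in>G. x)"
    by (simp add: prod.distrib card_G)
  also have "[\<dots> = 1 * - 1] (mod int p)"
    using assms by (intro cong_mult fermat_G wilson_G) (auto simp: G_def)
  finally have signed: "[(\<Prod>x\<in>G. (c * x) mod int p - x) = - 1] (mod int p)"
    by simp
  have "(\<Prod>x\<in>G. (c * x) mod int p - x)
      = (-1) ^ ((p - 1) div 2) * (\<Prod>x\<in>G. \<bar>(c * x) mod int p - x\<bar>)"
    using prod_eq_sign_mult_prod_abs[OF finite_G, of "\<lambda>x. (c * x) mod int p - x"]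
      card_mult_mod_descents[OF assms] by simp
  then have "(\<Prod>x\<in>G. \<bar>(c * x) mod int p - x\<bar>)
      = (-1) ^ ((p - 1) div 2) * (\<Prod>x\<in>G. (c * x) mod int p - x)"
    by (simp flip: power_add)
  also have "[\<dots> = (-1) ^ ((p - 1) div 2) * - 1] (mod int p)"
    using signed by (rule cong_scalar_left)
  also have "(-1) ^ ((p - 1) div 2) * - 1 = (-1 :: int) ^ Suc ((p - 1) div 2)"
    by simp
  also have "Suc ((p - 1) div 2) = (p + 1) div 2"
    using odd p_gt_2 by presburger
  finally show ?thesis .
qed

(* For a = 2 the multiples 2x with 0 < x <= (p-1)/2 are already reduced mod p. *)
lemma card_GAUSS_E_2: "card (GAUSS.E p 2) = (p + 1) div 4"
proof -
  interpret GAUSS p 2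
    using prime p_gt_2 by unfold_locales (auto simp: cong_def)
  define h where "h = (int p - 1) div 2"
  have h: "2 * h < int p" "h = int ((p - 1) div 2)"
    using odd p_gt_2 by (auto simp: h_def zdiv_int)
  have "E = (\<lambda>x. x * 2) ` {h div 2 + 1..h}"
  proof (intro equalityI subsetI)
    fix z assume "z \<in> E"
    then obtain x where "0 < x" "x \<le> h" "z = (x * 2) mod int p" "h < z"
      by (auto simp: E_def C_def B_def A_def h_def)
    moreover from this h have "(x * 2) mod int p = x * 2"
      by simp
    ultimately show "z \<in> (\<lambda>x. x * 2) ` {h div 2 + 1..h}"
      by (auto intro!: image_eqI[of _ _ x])
  next
    fix z assume "z \<in> (\<lambda>x. x * 2) ` {h div 2 + 1..h}"
    then obtain x where x: "h div 2 < x" "x \<le> h" "z = x * 2"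
      by auto
    moreover have "0 < x"
      using x(1) h(2) by linarith
    ultimately have "x \<in> A" "(x * 2) mod int p = z" "h < z"
      using h(1) by (auto simp: A_def simp flip: h_def)
    then show "z \<in> E"
      by (force simp: E_def C_def B_def simp flip: h_def)
  qed
  then have "card E = nat (h - h div 2)"
    by (simp add: card_image inj_on_def)
  also have "\<dots> = (p + 1) div 4"
    using h(2) odd by (simp add: zdiv_int)
  finally show ?thesis .
qed

lemma two_power_half: "[2 ^ ((p - 1) div 2) = (-1) ^ ((p + 1) div 4)] (mod int p)"
proof -
  interpret GAUSS p 2
    using prime p_gt_2 by unfold_locales (auto simp: cong_def)
  have "nat ((int p - 1) div 2) = (p - 1) div 2"
    using p_gt_2 by (simp add: zdiv_int nat_div_distrib)
  then show ?thesis
    using pre_gauss_lemma card_GAUSS_E_2 by simp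
qed

lemma minus_one_mult_mod: "x \<in> G \<Longrightarrow> ((int p - 1) * x) mod int p = int p - x"
  using mult_mod_minus[OF _ one_in_G, of x] by (simp add: mult.commute G_def)

lemma inv_mod_mult_mod:
  assumes "c \<in> G" "x \<in> G"
  shows "(inv_mod c * ((c * x) mod int p)) mod int p = x"
proof -
  have "[inv_mod c * ((c * x) mod int p) = (c * inv_mod c) * x] (mod int p)"
    by (simp add: cong_def mod_mult_right_eq ac_simps)
  also have "[(c * inv_mod c) * x = 1 * x] (mod int p)"
    using cong_inv_mod[OF assms(1)] by (rule cong_scalar_right)
  finally show ?thesis
    using assms(2) by (simp add: cong_def G_def)
qed

lemma mult_mod_kth_power:
  assumes "[c ^ k = 1] (mod int p)"
  shows "[((c * x) mod int p) ^ k = x ^ k] (mod int p)"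
proof -
  have "[((c * x) mod int p) ^ k = c ^ k * x ^ k] (mod int p)"
    by (simp add: cong_def power_mod power_mult_distrib)
  also have "[c ^ k * x ^ k = 1 * x ^ k] (mod int p)"
    using assms by (rule cong_scalar_right)
  finally show ?thesis
    by simp
qed

section \<open>Pairs with equal k-th powers\<close>

definition kth_power_pairs :: "nat \<Rightarrow> (int \<times> int) set" where
  "kth_power_pairs k = {(x, y) \<in> strict_pairs G. [y ^ k = x ^ k] (mod int p)}"

definition antipodal_pairs :: "nat \<Rightarrow> (int \<times> int) set" where
  "antipodal_pairs k = {(x, y) \<in> kth_power_pairs k. x + y = int p}"

definition nontrivial_kth_roots :: "nat \<Rightarrow> int set" where
  "nontrivial_kth_roots k = {c \<in> G. c \<noteq> 1 \<and> [c ^ k = 1] (mod int p)}"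

definition lower_kth_roots :: "nat \<Rightarrow> int set" where
  "lower_kth_roots k = {c \<in> nontrivial_kth_roots k. c < inv_mod c}"

lemma finite_kth_power_pairs: "finite (kth_power_pairs k)"
  by (rule finite_subset[OF _ finite_strict_pairs[OF finite_G]]) (auto simp: kth_power_pairs_def)

lemma inv_mod_nontrivial_kth_root:
  assumes "c \<in> nontrivial_kth_roots k"
  shows "inv_mod c \<in> nontrivial_kth_roots k"
proof -
  have c: "c \<in> G" "c \<noteq> 1" "[c ^ k = 1] (mod int p)"
    using assms by (auto simp: nontrivial_kth_roots_def)
  have "[inv_mod c ^ k = (c * inv_mod c) ^ k] (mod int p)"
    using cong_scalar_right[OF cong_sym[OF c(3)], of "inv_mod c ^ k"]
    by (simp add: power_mult_distrib)
  also have "[(c * inv_mod c) ^ k = 1 ^ k] (mod int p)"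
    using cong_inv_mod[OF c(1)] by (rule cong_pow)
  finally have "[inv_mod c ^ k = 1] (mod int p)"
    by simp
  moreover have "inv_mod c \<noteq> 1"
    using c inv_mod_inv_mod inv_mod_eqI[OF one_in_G one_in_G] by fastforce
  ultimately show ?thesis
    using inv_mod_in_G[OF c(1)] by (simp add: nontrivial_kth_roots_def)
qed

(* Inversion fixes no nontrivial root except -1; whether or not -1 is a k-th root, the others pair up. *)
lemma card_lower_kth_roots: "card (lower_kth_roots k) = card (nontrivial_kth_roots k) div 2"
proof -
  let ?K = "nontrivial_kth_roots k"
  define U where "U = {c \<in> ?K. inv_mod c < c}"
  have fin: "finite ?K"
    by (simp add: nontrivial_kth_roots_def)
  have involution: "inv_mod (inv_mod c) = c" if "c \<in> ?K" for c
    using that inv_mod_inv_mod by (simp add: nontrivial_kth_roots_def)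
  have "bij_betw inv_mod (lower_kth_roots k) U"
    by (rule bij_betw_byWitness[where f' = inv_mod])
      (auto simp: lower_kth_roots_def U_def involution inv_mod_nontrivial_kth_root)
  then have "card U = card (lower_kth_roots k)"
    by (simp add: bij_betw_same_card)
  moreover have "?K = (lower_kth_roots k \<union> U) \<union> (?K \<inter> {int p - 1})"
    using inv_mod_eq_self_iff by (force simp: lower_kth_roots_def U_def nontrivial_kth_roots_def)
  moreover have "inv_mod (int p - 1) = int p - 1"
    using inv_mod_eq_self_iff minus_in_G[OF one_in_G] by blast
  then have "(lower_kth_roots k \<union> U) \<inter> (?K \<inter> {int p - 1}) = {}"
    by (auto simp: lower_kth_roots_def U_def)
  moreover have "lower_kth_roots k \<inter> U = {}"
    by (auto simp: lower_kth_roots_def U_def)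
  moreover have "finite (lower_kth_roots k)" "finite U"
    using fin by (auto simp: lower_kth_roots_def U_def)
  ultimately have "card ?K = 2 * card (lower_kth_roots k) + card (?K \<inter> {int p - 1})"
    by (metis card_Un_disjoint finite_Int finite_UnI fin mult_2)
  moreover have "card (?K \<inter> {int p - 1}) \<le> 1"
    by (simp add: card_le_Suc0_iff_eq)
  ultimately show ?thesis
    by linarith
qed

definition root_pair :: "int \<Rightarrow> int \<Rightarrow> int \<times> int" where
  "root_pair c x = (min x ((c * x) mod int p), max x ((c * x) mod int p))"

lemma root_pair_in_non_antipodal:
  assumes "c \<in> lower_kth_roots k" "x \<in> G"
  shows "root_pair c x \<in> kth_power_pairs k - antipodal_pairs k"
proof -
  have c: "c \<in> G" "c \<noteq> 1" "[c ^ k = 1] (mod int p)" "c \<noteq> int p - 1"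
    using assms(1) inv_mod_eq_self_iff[of c] by (auto simp: lower_kth_roots_def nontrivial_kth_roots_def)
  let ?y = "(c * x) mod int p"
  have y: "?y \<in> G" "?y \<noteq> x" "[?y ^ k = x ^ k] (mod int p)"
    using mult_mod_in_G[OF c(1) assms(2)] mult_mod_neq[OF c(1,2) assms(2)]
      mult_mod_kth_power[OF c(3)] by blast+
  then have "root_pair c x \<in> kth_power_pairs k"
    using assms(2) by (cases "x < ?y") (auto simp: root_pair_def kth_power_pairs_def strict_pairs_def cong_sym)
  moreover have "x + ?y \<noteq> int p"
    using mult_mod_right_cancel[OF c(1) minus_in_G[OF one_in_G] assms(2)] c(4)
      minus_one_mult_mod[OF assms(2)] by auto
  ultimately show ?thesis
    by (auto simp: root_pair_def antipodal_pairs_def min_def max_def)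
qed

lemma inj_on_root_pair: "inj_on (\<lambda>(c, x). root_pair c x) (lower_kth_roots k \<times> G)"
proof (rule inj_onI, clarify)
  fix c x d u
  assume cx: "c \<in> lower_kth_roots k" "x \<in> G" and du: "d \<in> lower_kth_roots k" "u \<in> G"
    and eq: "root_pair c x = root_pair d u"
  have "c \<in> G" "c < inv_mod c" "d \<in> G" "d < inv_mod d"
    using cx(1) du(1) by (auto simp: lower_kth_roots_def nontrivial_kth_roots_def)
  from eq consider "x = u" "(c * x) mod int p = (d * u) mod int p"
    | "x = (d * u) mod int p" "(c * x) mod int p = u"
    unfolding root_pair_def min_max_eq_iff by blast
  then show "c = d \<and> x = u"
  proof cases
    case 1
    then show ?thesis
      using mult_mod_right_cancel \<open>c \<in> G\<close> \<open>d \<in> G\<close> cx(2) by blast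
  next
    case 2
    then have "(inv_mod d * x) mod int p = (c * x) mod int p"
      using inv_mod_mult_mod[OF \<open>d \<in> G\<close> du(2)] by simp
    then have "inv_mod d = c"
      using mult_mod_right_cancel[OF inv_mod_in_G \<open>c \<in> G\<close> cx(2)] \<open>d \<in> G\<close> by blast
    then show ?thesis
      using \<open>c < inv_mod c\<close> \<open>d < inv_mod d\<close> inv_mod_inv_mod \<open>d \<in> G\<close> by auto
  qed
qed

lemma quotient_in_nontrivial_kth_roots:
  assumes "(x, y) \<in> kth_power_pairs k - antipodal_pairs k" "c \<in> G" "(c * x) mod int p = y"
  shows "c \<in> nontrivial_kth_roots k" "inv_mod c \<noteq> c"
proof -
  have xy: "x \<in> G" "x < y" "[y ^ k = x ^ k] (mod int p)" "x + y \<noteq> int p"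
    using assms(1) by (auto simp: kth_power_pairs_def antipodal_pairs_def strict_pairs_def)
  have "c \<noteq> 1"
    using assms(3) xy(1,2) by (auto simp: G_def)
  moreover have "c \<noteq> int p - 1"
    using assms(3) minus_one_mult_mod[OF xy(1)] xy(4) by auto
  moreover have "[c ^ k * x ^ k = 1 * x ^ k] (mod int p)"
    using assms(3) xy(3) by (metis cong_def power_mod power_mult_distrib mult_1)
  then have "[c ^ k = 1] (mod int p)"
    using cong_mult_rcancel G_coprime[OF xy(1)] by (metis coprime_power_left_iff)
  ultimately show "c \<in> nontrivial_kth_roots k" "inv_mod c \<noteq> c"
    using assms(2) inv_mod_eq_self_iff[OF assms(2)] by (auto simp: nontrivial_kth_roots_def)
qed

lemma non_antipodal_subset_root_pair_image:
  "kth_power_pairs k - antipodal_pairs k \<subseteq> (\<lambda>(c, x). root_pair c x) ` (lower_kth_roots k \<times> G)"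
proof (clarify)
  fix x y
  assume xy: "(x, y) \<in> kth_power_pairs k" "(x, y) \<notin> antipodal_pairs k"
  then have "x \<in> G" "y \<in> G" "x < y"
    by (auto simp: kth_power_pairs_def strict_pairs_def)
  obtain c where c: "c \<in> G" "(c * x) mod int p = y"
    using mult_mod_surj[OF \<open>x \<in> G\<close> \<open>y \<in> G\<close>] .
  then have K: "c \<in> nontrivial_kth_roots k" and "inv_mod c \<noteq> c"
    using quotient_in_nontrivial_kth_roots xy by blast+
  then consider "c < inv_mod c" | "inv_mod c < c"
    by linarith
  then show "(x, y) \<in> (\<lambda>(c, x). root_pair c x) ` (lower_kth_roots k \<times> G)"
  proof cases
    case 1
    then have "c \<in> lower_kth_roots k"
      using K by (simp add: lower_kth_roots_def)
    moreover have "root_pair c x = (x, y)"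
      using c(2) \<open>x < y\<close> by (simp add: root_pair_def)
    ultimately show ?thesis
      using \<open>x \<in> G\<close> by force
  next
    case 2
    then have "inv_mod c \<in> lower_kth_roots k"
      using inv_mod_nontrivial_kth_root[OF K] inv_mod_inv_mod[OF c(1)]
      by (simp add: lower_kth_roots_def)
    moreover have "root_pair (inv_mod c) y = (x, y)"
      using inv_mod_mult_mod[OF c(1) \<open>x \<in> G\<close>] c(2) \<open>x < y\<close> by (simp add: root_pair_def)
    ultimately show ?thesis
      using \<open>y \<in> G\<close> by force
  qed
qed

lemma bij_betw_root_pair:
  "bij_betw (\<lambda>(c, x). root_pair c x) (lower_kth_roots k \<times> G) (kth_power_pairs k - antipodal_pairs k)"
  unfolding bij_betw_def
proof (intro conjI inj_on_root_pair equalityI non_antipodal_subset_root_pair_image)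
  show "(\<lambda>(c, x). root_pair c x) ` (lower_kth_roots k \<times> G) \<subseteq> kth_power_pairs k - antipodal_pairs k"
  proof (rule image_subsetI, clarify)
    fix c x assume "c \<in> lower_kth_roots k" "x \<in> G"
    then show "root_pair c x \<in> kth_power_pairs k - antipodal_pairs k"
      by (rule root_pair_in_non_antipodal)
  qed
qed

lemma prod_non_antipodal_pairs:
  "[(\<Prod>(x, y)\<in>kth_power_pairs k - antipodal_pairs k. y - x)
    = (-1) ^ ((p + 1) div 2 * (card (nontrivial_kth_roots k) div 2))] (mod int p)"
proof -
  have "(\<Prod>(x, y)\<in>kth_power_pairs k - antipodal_pairs k. y - x)
      = (\<Prod>(c, x)\<in>lower_kth_roots k \<times> G. snd (root_pair c x) - fst (root_pair c x))"
    using prod.reindex_bij_betw[OF bij_betw_root_pair, of "\<lambda>(x, y). y - x", symmetric]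
    by (simp add: split_def)
  also have "\<dots> = (\<Prod>c\<in>lower_kth_roots k. \<Prod>x\<in>G. \<bar>(c * x) mod int p - x\<bar>)"
    by (simp add: prod.cartesian_product root_pair_def split_def max_minus_min)
  also have "[\<dots> = (\<Prod>c\<in>lower_kth_roots k. (-1) ^ ((p + 1) div 2))] (mod int p)"
    by (intro cong_prod prod_abs_mult_mod_diff) (auto simp: lower_kth_roots_def nontrivial_kth_roots_def)
  finally show ?thesis
    by (simp add: card_lower_kth_roots power_mult)
qed

lemma antipodal_pairs_odd:
  assumes "odd k"
  shows "antipodal_pairs k = {}"
proof (rule ccontr)
  assume "antipodal_pairs k \<noteq> {}"
  then obtain x y where xy: "x \<in> G" "[y ^ k = x ^ k] (mod int p)" "x + y = int p"
    by (auto simp: antipodal_pairs_def kth_power_pairs_def strict_pairs_def)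
  have "[y = - x] (mod int p)"
    using xy(3) by (simp add: cong_iff_dvd_diff add.commute)
  then have "[y ^ k = - (x ^ k)] (mod int p)"
    using cong_pow[of y "- x" "int p" k] assms by simp
  then have "[x ^ k = - (x ^ k)] (mod int p)"
    using xy(2) by (meson cong_sym cong_trans)
  then have "int p dvd 2 * x ^ k"
    by (simp add: cong_iff_dvd_diff)
  moreover have "\<not> int p dvd 2"
    using p_gt_2 by (auto dest: zdvd_imp_le)
  moreover have "\<not> int p dvd x ^ k"
    using prime_dvd_power[OF prime_int] G_not_dvd[OF xy(1)] by blast
  ultimately show False
    using prime_dvd_mult_iff[OF prime_int] by blast
qed

lemma antipodal_pairs_even:
  assumes "even k"
  shows "antipodal_pairs k = (\<lambda>x. (int x, int p - int x)) ` {1..(p - 1) div 2}"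
proof (intro equalityI subsetI)
  fix z assume "z \<in> antipodal_pairs k"
  then obtain x y where "z = (x, y)" "1 \<le> x" "x < y" "x + y = int p"
    by (auto simp: antipodal_pairs_def kth_power_pairs_def strict_pairs_def G_def)
  then have "z = (int (nat x), int p - int (nat x))" "nat x \<in> {1..(p - 1) div 2}"
    using odd by auto
  then show "z \<in> (\<lambda>x. (int x, int p - int x)) ` {1..(p - 1) div 2}"
    by blast
next
  fix z assume "z \<in> (\<lambda>x. (int x, int p - int x)) ` {1..(p - 1) div 2}"
  then obtain x where x: "z = (int x, int p - int x)" "x \<in> {1..(p - 1) div 2}"
    by blast
  then have "int x \<in> G" "int x < int p - int x"
    using odd by (auto simp: G_def)
  moreover have "[(int p - int x) ^ k = int x ^ k] (mod int p)"
    using cong_pow[of "int p - int x" "- int x" "int p" k] assms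
    by (simp add: cong_iff_dvd_diff)
  ultimately show "z \<in> antipodal_pairs k"
    using minus_in_G x(1)
    by (auto simp: antipodal_pairs_def kth_power_pairs_def strict_pairs_def)
qed

lemma prod_antipodal_pairs:
  assumes "even k"
  shows "[(\<Prod>(x, y)\<in>antipodal_pairs k. y - x)
    = (-1) ^ ((p - 1) div 2 + (p + 1) div 4) * fact ((p - 1) div 2)] (mod int p)"
proof -
  define h where "h = (p - 1) div 2"
  have "(\<Prod>(x, y)\<in>antipodal_pairs k. y - x) = (\<Prod>x\<in>{1..h}. int p - 2 * int x)"
    unfolding antipodal_pairs_even[OF assms] h_def by (simp add: prod.reindex inj_on_def)
  also have "[\<dots> = (\<Prod>x\<in>{1..h}. - 2 * int x)] (mod int p)"
    by (rule cong_prod) (simp add: cong_iff_dvd_diff)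
  also have "(\<Prod>x\<in>{1..h}. - 2 * int x) = (- 2) ^ h * (\<Prod>x\<in>{1..h}. int x)"
    by (subst prod.distrib) simp
  also have "\<dots> = (-1) ^ h * 2 ^ h * fact h"
    by (simp add: fact_prod flip: power_mult_distrib)
  also have "[\<dots> = (-1) ^ h * (-1) ^ ((p + 1) div 4) * fact h] (mod int p)"
    using two_power_half unfolding h_def[symmetric] by (intro cong_mult cong_refl)
  finally show ?thesis
    by (simp add: h_def power_add)
qed

lemma prod_kth_power_pairs_odd:
  assumes "odd k"
  shows "[(\<Prod>(x, y)\<in>kth_power_pairs k. y - x)
    = (-1) ^ ((p + 1) div 2 * (card (nontrivial_kth_roots k) div 2))] (mod int p)"
  using prod_non_antipodal_pairs[of k] by (simp add: antipodal_pairs_odd[OF assms])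

lemma prod_kth_power_pairs_even:
  assumes "even k"
  shows "[(\<Prod>(x, y)\<in>kth_power_pairs k. y - x)
    = (-1) ^ ((p + 1) div 2 * (card (nontrivial_kth_roots k) div 2) + (p - 1) div 2 + (p + 1) div 4)
      * fact ((p - 1) div 2)] (mod int p)"
proof -
  have "antipodal_pairs k \<subseteq> kth_power_pairs k"
    by (auto simp: antipodal_pairs_def)
  then have "(\<Prod>(x, y)\<in>kth_power_pairs k. y - x)
      = (\<Prod>(x, y)\<in>kth_power_pairs k - antipodal_pairs k. y - x) * (\<Prod>(x, y)\<in>antipodal_pairs k. y - x)"
    by (rule prod.subset_diff[OF _ finite_kth_power_pairs])
  also have "[\<dots> = (-1) ^ ((p + 1) div 2 * (card (nontrivial_kth_roots k) div 2))
      * ((-1) ^ ((p - 1) div 2 + (p + 1) div 4) * fact ((p - 1) div 2))] (mod int p)"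
    by (intro cong_mult prod_non_antipodal_pairs prod_antipodal_pairs assms)
  finally show ?thesis
    by (simp add: power_add mult.assoc)
qed

lemma card_kth_power_fibre_le:
  assumes "k > 0" "x \<in> G"
  shows "card {y \<in> G. [y ^ k = x ^ k] (mod int p)} \<le> k"
proof -
  let ?F = "{y \<in> G. [y ^ k = x ^ k] (mod int p)}"
  have "nat ` ?F \<subseteq> {y \<in> {..<p}. [y ^ k = nat x ^ k] (mod p)}"
  proof (rule image_subsetI)
    fix y assume "y \<in> ?F"
    then show "nat y \<in> {y \<in> {..<p}. [y ^ k = nat x ^ k] (mod p)}"
      using assms(2) by (auto simp: G_def simp flip: cong_int_iff)
  qed
  then have "card (nat ` ?F) \<le> card {y \<in> {..<p}. [y ^ k = nat x ^ k] (mod p)}"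
    by (intro card_mono) simp_all
  also have "\<dots> \<le> k"
    by (rule roots_mod_prime_bound[OF prime assms(1)])
  finally have "card (nat ` ?F) \<le> k" .
  moreover have "inj_on nat ?F"
    by (rule inj_onI) (auto simp: G_def)
  ultimately show ?thesis
    by (simp add: card_image)
qed

end

section \<open>Enumerated cosets of the m-th powers\<close>

lemma cofactor_even:
  fixes k m p :: nat
  assumes "k * m = p - 1" "m > 0" "p > 0" "[p = 1] (mod 2 * m)"
  shows "k = 2 * ((p - 1) div (2 * m))"
proof -
  obtain q where "p = q * (2 * m) + 1"
    using assms(3,4) cong_le_nat[of 1 p] by auto
  with assms(1,2) show ?thesis
    by (simp add: mult.assoc[symmetric])
qed

lemma cofactor_odd:
  fixes k m p :: nat
  assumes "k * m = p - 1" "k > 0" "m > 0" "[p = 1 + m] (mod 2 * m)"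
  shows "k = 2 * ((p - 1 - m) div (2 * m)) + 1"
proof -
  have "1 + m \<le> p"
  proof -
    have "m \<le> k * m"
      using assms(2) by simp
    then show ?thesis
      using assms(1,3) by linarith
  qed
  then obtain q where "p = q * (2 * m) + (1 + m)"
    using assms(4) cong_le_nat[of "1 + m" p] by auto
  then have "k * m = (2 * q + 1) * m"
    using assms(1) by (simp add: algebra_simps)
  then have "k = 2 * q + 1"
    using assms(3) by (metis mult_right_cancel not_gr0)
  moreover have "(p - 1 - m) div (2 * m) = q"
    using \<open>p = q * (2 * m) + (1 + m)\<close> assms(3) by simp
  ultimately show ?thesis
    by simp
qed

lemma sign_exponent_even_case:
  fixes p q :: nat
  assumes "odd p" "p \<ge> 3" "q > 0"
  shows "(p + 1) div 2 * ((2 * q - 1) div 2) + (p - 1) div 2 + (p + 1) div 4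
    = (p + 1) div 2 * q + (p - 3) div 4"
proof -
  obtain r where "q = Suc r"
    using assms(3) gr0_implies_Suc by blast
  moreover have "\<exists>h. p = 2 * h + 1 \<and> h \<ge> 1"
    using assms(1,2) by presburger
  then obtain h where "p = 2 * h + 1" "h \<ge> 1"
    by blast
  then have "(p - 1) div 2 + (p + 1) div 4 = (p + 1) div 2 + (p - 3) div 4"
    by simp
  ultimately show ?thesis
    by simp
qed

locale coset_enumeration = odd_prime +
  fixes k m :: nat and a :: "nat \<Rightarrow> nat \<Rightarrow> int"
  assumes k_pos: "k > 0" and km: "k * m = p - 1"
    and range: "\<forall>i\<in>{1..m}. \<forall>j\<in>{1..k}. 1 \<le> a i j \<and> a i j \<le> int p - 1"
    and sorted: "\<forall>i\<in>{1..m}. \<forall>s t. 1 \<le> s \<and> s < t \<and> t \<le> k \<longrightarrow> a i s < a i t"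
    and distinct: "inj_on (\<lambda>i. a i ` {1..k}) {1..m}"
    and cosets: "(\<lambda>i. a i ` {1..k}) ` {1..m} = cosets_mod p (mpowers p m)"
begin

definition coset :: "nat \<Rightarrow> int set" where "coset i = a i ` {1..k}"

lemma strict_mono_on_row: "i \<in> {1..m} \<Longrightarrow> strict_mono_on {1..k} (a i)"
  using sorted by (auto simp: strict_mono_on_def)

lemma card_coset: "i \<in> {1..m} \<Longrightarrow> card (coset i) = k"
  using card_image[OF strict_mono_on_imp_inj_on[OF strict_mono_on_row]] by (simp add: coset_def)

lemma coset_subset_G: "i \<in> {1..m} \<Longrightarrow> coset i \<subseteq> G"
  using range by (auto simp: coset_def G_def)

lemma kth_power_mult_mth_power:
  assumes "z \<in> G"
  shows "[((g * (z ^ m mod int p)) mod int p) ^ k = g ^ k] (mod int p)"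
proof -
  have "[((g * (z ^ m mod int p)) mod int p) ^ k = (g * z ^ m) ^ k] (mod int p)"
    by (intro cong_pow) (simp add: cong_def mod_mult_right_eq)
  also have "(g * z ^ m) ^ k = g ^ k * z ^ (p - 1)"
    using km by (simp add: power_mult_distrib mult.commute[of m k] flip: power_mult)
  also have "[g ^ k * z ^ (p - 1) = g ^ k * 1] (mod int p)"
    using fermat_G[OF assms] by (rule cong_scalar_left)
  finally show ?thesis
    by simp
qed

lemma kth_power_cong_on_coset:
  assumes "i \<in> {1..m}" "x \<in> coset i" "y \<in> coset i"
  shows "[y ^ k = x ^ k] (mod int p)"
proof -
  have "coset i \<in> cosets_mod p (mpowers p m)"
    using cosets assms(1) by (auto simp: coset_def)
  then obtain g where g: "coset i = {(g * h) mod int p | h. h \<in> mpowers p m}"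
    by (auto simp: cosets_mod_def)
  have "[w ^ k = g ^ k] (mod int p)" if w: "w \<in> coset i" for w
  proof -
    obtain h where h: "h \<in> mpowers p m" "w = (g * h) mod int p"
      using w unfolding g by blast
    then obtain z where "z \<in> G" "h = z ^ m mod int p"
      unfolding mpowers_def G_def by blast
    then show ?thesis
      using kth_power_mult_mth_power h(2) by blast
  qed
  then show ?thesis
    using assms(2,3) by (meson cong_sym cong_trans)
qed

lemma coset_eq_kth_power_fibre:
  assumes "i \<in> {1..m}" "x \<in> coset i"
  shows "coset i = {y \<in> G. [y ^ k = x ^ k] (mod int p)}"
proof (rule card_seteq)
  show "coset i \<subseteq> {y \<in> G. [y ^ k = x ^ k] (mod int p)}"
    using coset_subset_G[OF assms(1)] kth_power_cong_on_coset[OF assms] by blast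
  show "card {y \<in> G. [y ^ k = x ^ k] (mod int p)} \<le> card (coset i)"
    using card_kth_power_fibre_le[OF k_pos] card_coset[OF assms(1)] coset_subset_G[OF assms(1)] assms(2)
    by auto
qed simp

lemma in_some_coset:
  assumes "x \<in> G"
  obtains i where "i \<in> {1..m}" "x \<in> coset i"
proof -
  let ?S = "{(x * h) mod int p | h. h \<in> mpowers p m}"
  have "?S \<in> cosets_mod p (mpowers p m)"
    using assms unfolding cosets_mod_def G_def by blast
  then obtain i where i: "i \<in> {1..m}" "coset i = ?S"
    unfolding cosets[symmetric] coset_def by blast
  have "1 = (1::int) ^ m mod int p" "(1::int) \<in> {1..int p - 1}"
    using p_gt_2 by auto
  then have "1 \<in> mpowers p m"
    unfolding mpowers_def by blast
  then have "(x * 1) mod int p \<in> coset i"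
    unfolding i(2) by blast
  then show ?thesis
    using that i(1) assms by (simp add: G_def)
qed

lemma cosets_disjoint:
  assumes "i \<in> {1..m}" "j \<in> {1..m}" "i \<noteq> j"
  shows "coset i \<inter> coset j = {}"
proof (rule ccontr)
  assume "coset i \<inter> coset j \<noteq> {}"
  then obtain x where x: "x \<in> coset i" "x \<in> coset j"
    by blast
  have "coset i = coset j"
    unfolding coset_eq_kth_power_fibre[OF assms(1) x(1)] coset_eq_kth_power_fibre[OF assms(2) x(2)] ..
  then show False
    using inj_onD[OF distinct _ assms(1,2)] assms(3) by (simp add: coset_def)
qed

lemma kth_power_pairs_eq_UN_cosets:
  "kth_power_pairs k = (\<Union>i\<in>{1..m}. strict_pairs (coset i))"
proof (intro equalityI subsetI)
  fix z assume "z \<in> kth_power_pairs k"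
  then obtain x y where z: "z = (x, y)" "x \<in> G" "y \<in> G" "x < y" "[y ^ k = x ^ k] (mod int p)"
    by (auto simp: kth_power_pairs_def strict_pairs_def)
  obtain i where "i \<in> {1..m}" "x \<in> coset i"
    using in_some_coset[OF z(2)] .
  moreover from this have "y \<in> coset i"
    using coset_eq_kth_power_fibre z(3,5) by blast
  ultimately show "z \<in> (\<Union>i\<in>{1..m}. strict_pairs (coset i))"
    using z by (auto simp: strict_pairs_def)
next
  fix z assume "z \<in> (\<Union>i\<in>{1..m}. strict_pairs (coset i))"
  then obtain i x y where "i \<in> {1..m}" "x \<in> coset i" "y \<in> coset i" "x < y" "z = (x, y)"
    by (auto simp: strict_pairs_def)
  then show "z \<in> kth_power_pairs k"
    using coset_subset_G kth_power_cong_on_coset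
    by (auto simp: kth_power_pairs_def strict_pairs_def)
qed

lemma card_nontrivial_kth_roots: "card (nontrivial_kth_roots k) = k - 1"
proof -
  obtain i where i: "i \<in> {1..m}" "1 \<in> coset i"
    using in_some_coset[OF one_in_G] .
  have "nontrivial_kth_roots k = coset i - {1}"
    using coset_eq_kth_power_fibre[OF i] by (auto simp: nontrivial_kth_roots_def)
  then show ?thesis
    using card_coset[OF i(1)] i(2) by (simp add: coset_def)
qed

lemma prod_coset_differences:
  "(\<Prod>i\<in>{1..m}. \<Prod>(s, t)\<in>{(s, t). 1 \<le> s \<and> s < t \<and> t \<le> k}. a i t - a i s)
    = (\<Prod>(x, y)\<in>kth_power_pairs k. y - x)"
proof -
  have "{(s, t). 1 \<le> s \<and> s < t \<and> t \<le> k} = strict_pairs {1..k}"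
    by (auto simp: strict_pairs_def)
  then have "(\<Prod>i\<in>{1..m}. \<Prod>(s, t)\<in>{(s, t). 1 \<le> s \<and> s < t \<and> t \<le> k}. a i t - a i s)
      = (\<Prod>i\<in>{1..m}. \<Prod>(x, y)\<in>strict_pairs (coset i). y - x)"
    using prod_strict_pairs_reindex[OF strict_mono_on_row, where g = "\<lambda>x y. y - x"]
    by (intro prod.cong) (simp_all add: coset_def)
  also have "\<dots> = (\<Prod>(x, y)\<in>(\<Union>i\<in>{1..m}. strict_pairs (coset i)). y - x)"
  proof (rule prod.UNION_disjoint[symmetric])
    show "\<forall>i\<in>{1..m}. finite (strict_pairs (coset i))"
      by (simp add: coset_def finite_strict_pairs)
    show "\<forall>i\<in>{1..m}. \<forall>j\<in>{1..m}. i \<noteq> j \<longrightarrow> strict_pairs (coset i) \<inter> strict_pairs (coset j) = {}"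
      using cosets_disjoint unfolding strict_pairs_def by blast
  qed simp
  finally show ?thesis
    by (simp add: kth_power_pairs_eq_UN_cosets)
qed

lemma m_pos: "m > 0"
  using km p_gt_2 by (cases m) auto

lemma prod_coset_differences_cong_even:
  assumes "[p = 1] (mod 2 * m)"
  shows "[(\<Prod>i\<in>{1..m}. \<Prod>(s, t)\<in>{(s, t). 1 \<le> s \<and> s < t \<and> t \<le> k}. a i t - a i s)
    = (-1) ^ ((p + 1) div 2 * ((p - 1) div (2 * m)) + (p - 3) div 4) * fact ((p - 1) div 2)] (mod int p)"
proof -
  define q where "q = (p - 1) div (2 * m)"
  have k: "k = 2 * q"
    using cofactor_even[OF km m_pos _ assms] p_gt_2 by (simp add: q_def)
  have "q > 0"
    using k k_pos by simp
  have "(p + 1) div 2 * (card (nontrivial_kth_roots k) div 2) + (p - 1) div 2 + (p + 1) div 4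
      = (p + 1) div 2 * q + (p - 3) div 4"
    unfolding card_nontrivial_kth_roots unfolding k
    by (rule sign_exponent_even_case[OF odd _ \<open>q > 0\<close>]) (use p_gt_2 in simp)
  moreover have "even k"
    using k by simp
  ultimately show ?thesis
    using prod_kth_power_pairs_even unfolding prod_coset_differences q_def by metis
qed

lemma prod_coset_differences_cong_odd:
  assumes "[p = 1 + m] (mod 2 * m)"
  shows "[(\<Prod>i\<in>{1..m}. \<Prod>(s, t)\<in>{(s, t). 1 \<le> s \<and> s < t \<and> t \<le> k}. a i t - a i s)
    = (-1) ^ ((p + 1) div 2 * ((p - 1 - m) div (2 * m)))] (mod int p)"
proof -
  have k: "k = 2 * ((p - 1 - m) div (2 * m)) + 1"
    using cofactor_odd[OF km k_pos m_pos assms] .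
  then have "card (nontrivial_kth_roots k) div 2 = (p - 1 - m) div (2 * m)"
    unfolding card_nontrivial_kth_roots by simp
  moreover have "odd k"
    using k by simp
  ultimately show ?thesis
    using prod_kth_power_pairs_odd unfolding prod_coset_differences by metis
qed

end

theorem theorem3p1:
  fixes p k m :: nat and a :: "nat \<Rightarrow> nat \<Rightarrow> int"
  assumes "prime p" and "odd p"
    and "k > 0" and "m > 0" and "k * m = p - 1"
    and range: "\<forall>i\<in>{1..m}. \<forall>j\<in>{1..k}. 1 \<le> a i j \<and> a i j \<le> int p - 1"
    and sorted: "\<forall>i\<in>{1..m}. \<forall>s t. 1 \<le> s \<and> s < t \<and> t \<le> k \<longrightarrow> a i s < a i t"
    and distinct: "inj_on (\<lambda>i. a i ` {1..k}) {1..m}"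
    and cosets: "(\<lambda>i. a i ` {1..k}) ` {1..m} = cosets_mod p (mpowers p m)"
  shows "([p = 1] (mod 2 * m) \<longrightarrow>
           [(\<Prod>i\<in>{1..m}. \<Prod>(s, t)\<in>{(s, t). 1 \<le> s \<and> s < t \<and> t \<le> k}. a i t - a i s)
             = (-1) ^ ((p + 1) div 2 * ((p - 1) div (2 * m)) + (p - 3) div 4)
               * fact ((p - 1) div 2)] (mod int p))
       \<and> ([p = 1 + m] (mod 2 * m) \<longrightarrow>
           [(\<Prod>i\<in>{1..m}. \<Prod>(s, t)\<in>{(s, t). 1 \<le> s \<and> s < t \<and> t \<le> k}. a i t - a i s)
             = (-1) ^ ((p + 1) div 2 * ((p - 1 - m) div (2 * m)))] (mod int p))"
proof -
  interpret coset_enumeration p k m a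
    by unfold_locales (use assms in auto)
  show ?thesis
    using prod_coset_differences_cong_even prod_coset_differences_cong_odd by blast
qed

end
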